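(* Let $K$ be a field, $S=K[x_1,\dots,x_n]$, $A\subseteq\{1,\dots,n\}$ and $f=\prod_{j\in A}x_j$. Then $\operatorname{sdepth}(S_f)=n$.
   Context: $S_f=K[x_1,\dots,x_n,x_j^{-1}:j\in A]$, with $K$-basis the monomials $x_1^{a_1}\cdots x_n^{a_n}$, $a_j\in\mathbb Z$ for $j\in A$, $a_j\in\mathbb N$ otherwise. A Stanley space of $S_f$ is $uK[Z]$, the $K$-span of all $uw$ ($w$ a monomial in the elements of $Z$), where $u$ is a monomial, $Z\subseteq\{x_1,\dots,x_n\}\cup\{x_j^{-1}:j\in A\}$ with $\{x_j,x_j^{-1}\}\not\subseteq Z$ for all $j\in A$, and $uK[Z]$ is a free $K[Z]$-module; its dimension is $|Z|$. A Stanley decomposition $\mathcal D$ is a finite direct sum of Stanley spaces equal to $S_f$; $\operatorname{sdepth}\mathcal D$ is the minimal dimension of its spaces and $\operatorname{sdepth}(S_f)$ the maximum of $\operatorname{sdepth}\mathcal D$ over all Stanley decompositions. *)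

theory Defs
  imports Main
begin

text \<open>Monomials of S_f = K[x_1..x_n, x_j^-1 : j in A] are identified with their exponent
vectors a :: nat => int, supported on {1..n}, with a j >= 0 for j not in A.
Elements of S_f are finitely supported K-valued functions on these exponent vectors
(coefficient functions). A generator (j, True) stands for x_j, (j, False) for x_j^-1.\<close>

definition mon_set :: "nat \<Rightarrow> nat set \<Rightarrow> (nat \<Rightarrow> int) set" where
  "mon_set n A = {a. (\<forall>j. j \<notin> {1..n} \<longrightarrow> a j = 0) \<and> (\<forall>j\<in>{1..n} - A. 0 \<le> a j)}"

definition Sf :: "nat \<Rightarrow> nat set \<Rightarrow> ((nat \<Rightarrow> int) \<Rightarrow> 'k::field) set" where
  "Sf n A = {p. finite {a. p a \<noteq> 0} \<and> {a. p a \<noteq> 0} \<subseteq> mon_set n A}"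

definition gexp :: "nat \<times> bool \<Rightarrow> nat \<Rightarrow> int" where
  "gexp z = (\<lambda>i. if i = fst z then (if snd z then 1 else -1) else 0)"

text \<open>exponent vector of u * prod_{z in Z} z^(c z)\<close>
definition zprod :: "(nat \<Rightarrow> int) \<Rightarrow> (nat \<times> bool) set \<Rightarrow> (nat \<times> bool \<Rightarrow> nat) \<Rightarrow> nat \<Rightarrow> int" where
  "zprod u Z c = (\<lambda>i. u i + (\<Sum>z\<in>Z. int (c z) * gexp z i))"

definition zexps :: "(nat \<times> bool) set \<Rightarrow> (nat \<times> bool \<Rightarrow> nat) set" where
  "zexps Z = {c. \<forall>z. z \<notin> Z \<longrightarrow> c z = 0}"

definition stanley_space :: "(nat \<Rightarrow> int) \<Rightarrow> (nat \<times> bool) set \<Rightarrow> ((nat \<Rightarrow> int) \<Rightarrow> 'k::field) set" where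
  "stanley_space u Z = {p. finite {a. p a \<noteq> 0} \<and> {a. p a \<noteq> 0} \<subseteq> zprod u Z ` zexps Z}"

text \<open>Admissibility of (u, Z): u a monomial of S_f, Z a set of variables/inverse variables
not containing both x_j and x_j^-1, and u K[Z] free over K[Z] (the monomials u w,
w ranging over monomials in Z, are pairwise distinct).\<close>
definition is_stanley_space :: "nat \<Rightarrow> nat set \<Rightarrow> (nat \<Rightarrow> int) \<Rightarrow> (nat \<times> bool) set \<Rightarrow> bool" where
  "is_stanley_space n A u Z \<longleftrightarrow>
     u \<in> mon_set n A \<and>
     Z \<subseteq> ({1..n} \<times> {True}) \<union> (A \<times> {False}) \<and>
     (\<forall>j\<in>A. \<not> ((j, True) \<in> Z \<and> (j, False) \<in> Z)) \<and>
     inj_on (zprod u Z) (zexps Z)"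

definition stanley_decomp :: "'k::field itself \<Rightarrow> nat \<Rightarrow> nat set
    \<Rightarrow> ((nat \<Rightarrow> int) \<times> (nat \<times> bool) set) list \<Rightarrow> bool" where
  "stanley_decomp _ n A D \<longleftrightarrow>
     (\<forall>d\<in>set D. is_stanley_space n A (fst d) (snd d)) \<and>
     (\<forall>d\<in>set D. (stanley_space (fst d) (snd d) :: ((nat \<Rightarrow> int) \<Rightarrow> 'k) set) \<subseteq> Sf n A) \<and>
     (\<forall>p \<in> (Sf n A :: ((nat \<Rightarrow> int) \<Rightarrow> 'k) set).
        \<exists>!ps. length ps = length D \<and>
              (\<forall>i<length D. ps ! i \<in> stanley_space (fst (D ! i)) (snd (D ! i))) \<and>
              p = (\<lambda>a. \<Sum>i<length D. (ps ! i) a))"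

definition sdepth_decomp :: "((nat \<Rightarrow> int) \<times> (nat \<times> bool) set) list \<Rightarrow> nat" where
  "sdepth_decomp D = Min ((\<lambda>d. card (snd d)) ` set D)"

definition sdepth_Sf :: "'k::field itself \<Rightarrow> nat \<Rightarrow> nat set \<Rightarrow> nat" where
  "sdepth_Sf K n A = Max {sdepth_decomp D | D. stanley_decomp K n A D}"

end

theory Submission
  imports Defs
begin

text \<open>The monomials of \<open>S\<^sub>f\<close> split into \<open>2\<^sup>|\<^sup>A\<^sup>|\<close> orthants according to which
exponents \<open>a\<^sub>j\<close>, \<open>j \<in> A\<close>, are negative. The orthant with negative coordinates \<open>B \<subseteq> A\<close>
is the Stanley space \<open>u K[Z]\<close> with \<open>u = \<Prod>\<^sub>j\<^sub>\<in>\<^sub>B x\<^sub>j\<^sup>-\<^sup>1\<close> and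
\<open>Z = {x\<^sub>j\<^sup>-\<^sup>1 : j \<in> B} \<union> {x\<^sub>j : j \<notin> B}\<close>, which has dimension \<open>n\<close>; so \<open>sdepth \<ge> n\<close>.
Conversely a Stanley space never contains both \<open>x\<^sub>j\<close> and \<open>x\<^sub>j\<^sup>-\<^sup>1\<close>, so \<open>|Z| \<le> n\<close>.\<close>

definition orthant :: "nat \<Rightarrow> (nat \<Rightarrow> bool) \<Rightarrow> (nat \<Rightarrow> int) set" where
  "orthant n b = {a. (\<forall>j. j \<notin> {1..n} \<longrightarrow> a j = 0) \<and> (\<forall>j\<in>{1..n}. b j \<longleftrightarrow> 0 \<le> a j)}"

definition orthant_base :: "nat \<Rightarrow> (nat \<Rightarrow> bool) \<Rightarrow> nat \<Rightarrow> int" where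
  "orthant_base n b = (\<lambda>j. if j \<in> {1..n} \<and> \<not> b j then -1 else 0)"

definition orthant_vars :: "nat \<Rightarrow> (nat \<Rightarrow> bool) \<Rightarrow> (nat \<times> bool) set" where
  "orthant_vars n b = (\<lambda>j. (j, b j)) ` {1..n}"

lemma inj_on_orthant_var: "inj_on (\<lambda>j. (j, b j)) J"
  by (auto simp: inj_on_def)

lemma card_orthant_vars: "card (orthant_vars n b) = n"
  by (simp add: orthant_vars_def card_image[OF inj_on_orthant_var])

lemma zprod_orthant:
  "zprod (orthant_base n b) (orthant_vars n b) c i =
     (if i \<in> {1..n} then (if b i then int (c (i, b i)) else -1 - int (c (i, b i))) else 0)"
proof -
  have "(\<Sum>z\<in>orthant_vars n b. int (c z) * gexp z i)
      = (\<Sum>j\<in>{1..n}. int (c (j, b j)) * gexp (j, b j) i)"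
    unfolding orthant_vars_def by (simp add: sum.reindex[OF inj_on_orthant_var])
  also have "\<dots> = (\<Sum>j\<in>{1..n}. if i = j then int (c (i, b i)) * (if b i then 1 else -1) else 0)"
    by (rule sum.cong) (auto simp: gexp_def)
  finally show ?thesis
    by (simp add: zprod_def orthant_base_def sum.delta)
qed

lemma zprod_orthant_image:
  "zprod (orthant_base n b) (orthant_vars n b) ` zexps (orthant_vars n b) = orthant n b"
proof
  show "zprod (orthant_base n b) (orthant_vars n b) ` zexps (orthant_vars n b) \<subseteq> orthant n b"
    by (auto simp: orthant_def zprod_orthant split: if_splits)
next
  show "orthant n b \<subseteq> zprod (orthant_base n b) (orthant_vars n b) ` zexps (orthant_vars n b)"
  proof
    fix a assume a: "a \<in> orthant n b"
    define c where "c = (\<lambda>z. if z \<in> orthant_vars n b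
      then (if snd z then nat (a (fst z)) else nat (- a (fst z) - 1)) else 0)"
    have "zprod (orthant_base n b) (orthant_vars n b) c = a"
    proof
      fix i
      show "zprod (orthant_base n b) (orthant_vars n b) c i = a i"
      proof (cases "i \<in> {1..n}")
        case True
        then have "(i, b i) \<in> orthant_vars n b" and "b i \<longleftrightarrow> 0 \<le> a i"
          using a by (auto simp: orthant_vars_def orthant_def)
        with True show ?thesis by (cases "b i") (auto simp: zprod_orthant c_def)
      next
        case False
        with a show ?thesis by (auto simp: zprod_orthant orthant_def)
      qed
    qed
    moreover have "c \<in> zexps (orthant_vars n b)"
      by (simp add: c_def zexps_def)
    ultimately show "a \<in> zprod (orthant_base n b) (orthant_vars n b) ` zexps (orthant_vars n b)"
      by blast
  qed
qed

lemma inj_on_zprod_orthant: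
  "inj_on (zprod (orthant_base n b) (orthant_vars n b)) (zexps (orthant_vars n b))"
proof (rule inj_onI, rule ext)
  fix c d z
  assume c: "c \<in> zexps (orthant_vars n b)" and d: "d \<in> zexps (orthant_vars n b)"
    and eq: "zprod (orthant_base n b) (orthant_vars n b) c = zprod (orthant_base n b) (orthant_vars n b) d"
  show "c z = d z"
  proof (cases "z \<in> orthant_vars n b")
    case True
    then obtain j where j: "j \<in> {1..n}" "z = (j, b j)"
      unfolding orthant_vars_def by blast
    from fun_cong[OF eq, of j] j show ?thesis
      by (cases "b j") (simp_all add: zprod_orthant)
  next
    case False
    with c d show ?thesis unfolding zexps_def mem_Collect_eq by metis
  qed
qed

lemma is_stanley_space_orthant:
  assumes "\<forall>j\<in>{1..n}. \<not> b j \<longrightarrow> j \<in> A"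
  shows "is_stanley_space n A (orthant_base n b) (orthant_vars n b)"
  using assms inj_on_zprod_orthant
  by (auto simp: is_stanley_space_def orthant_base_def orthant_vars_def mon_set_def)

lemma orthant_subset_mon_set:
  assumes "\<forall>j\<in>{1..n}. \<not> b j \<longrightarrow> j \<in> A"
  shows "orthant n b \<subseteq> mon_set n A"
  using assms by (auto simp: orthant_def mon_set_def)

lemma orthants_disjoint:
  assumes "j \<in> {1..n}" "b j \<noteq> b' j"
  shows "orthant n b \<inter> orthant n b' = {}"
  using assms by (auto simp: orthant_def)

lemma mon_set_in_orthant:
  assumes "a \<in> mon_set n A"
  shows "a \<in> orthant n (\<lambda>j. j \<notin> {j\<in>A. a j < 0})"
  using assms by (auto simp: mon_set_def orthant_def)

lemma sum_restrict_partition: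
  fixes p :: "'a \<Rightarrow> 'b::comm_monoid_add" and m :: nat
  assumes disj: "\<forall>i<m. \<forall>k<m. i \<noteq> k \<longrightarrow> M i \<inter> M k = {}"
    and cov: "{a. p a \<noteq> 0} \<subseteq> (\<Union>i<m. M i)"
  shows "(\<Sum>i<m. if a \<in> M i then p a else 0) = p a"
proof (cases "p a = 0")
  case False
  then obtain i where i: "i < m" "a \<in> M i" using cov by blast
  have "(\<Sum>k<m. if a \<in> M k then p a else 0) = (\<Sum>k<m. if k = i then p a else 0)"
    using disj i by (intro sum.cong) auto
  also have "\<dots> = p a" using i by simp
  finally show ?thesis .
qed (simp add: sum.neutral)

lemma component_eq_restrict:
  fixes ps :: "('a \<Rightarrow> 'b::comm_monoid_add) list"
  assumes disj: "\<forall>i<length ps. \<forall>k<length ps. i \<noteq> k \<longrightarrow> M i \<inter> M k = {}"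
    and supp: "\<forall>i<length ps. {a. (ps ! i) a \<noteq> 0} \<subseteq> M i"
    and i: "i < length ps"
  shows "(ps ! i) a = (if a \<in> M i then (\<Sum>k<length ps. (ps ! k) a) else 0)"
proof (cases "a \<in> M i")
  case True
  have "(ps ! k) a = 0" if "k < length ps" "k \<noteq> i" for k
    using disj supp i True that by blast
  then have "(\<Sum>k<length ps. (ps ! k) a) = (\<Sum>k<length ps. if k = i then (ps ! i) a else 0)"
    by (intro sum.cong) auto
  then show ?thesis using i True by simp
qed (use supp i in auto)

lemma stanley_decomp_of_partition:
  fixes D :: "((nat \<Rightarrow> int) \<times> (nat \<times> bool) set) list"
  defines "M \<equiv> \<lambda>i. zprod (fst (D ! i)) (snd (D ! i)) ` zexps (snd (D ! i))"
  assumes spaces: "\<forall>d\<in>set D. is_stanley_space n A (fst d) (snd d)"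
    and sub: "\<forall>i<length D. M i \<subseteq> mon_set n A"
    and disj: "\<forall>i<length D. \<forall>k<length D. i \<noteq> k \<longrightarrow> M i \<inter> M k = {}"
    and cov: "mon_set n A \<subseteq> (\<Union>i<length D. M i)"
  shows "stanley_decomp TYPE('k::field) n A D"
proof -
  have space_eq: "stanley_space (fst (D ! i)) (snd (D ! i)) = {p. finite {a. p a \<noteq> 0} \<and> {a. p a \<noteq> 0} \<subseteq> M i}" for i
    by (simp add: stanley_space_def M_def)
  have "(stanley_space (fst d) (snd d) :: ((nat \<Rightarrow> int) \<Rightarrow> 'k) set) \<subseteq> Sf n A" if "d \<in> set D" for d
  proof -
    obtain i where i: "i < length D" "d = D ! i"
      using \<open>d \<in> set D\<close> by (metis in_set_conv_nth)
    then have "M i \<subseteq> mon_set n A" using sub by simp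
    then show ?thesis unfolding i(2) space_eq Sf_def by auto
  qed
  moreover have "\<exists>!ps. length ps = length D \<and>
      (\<forall>i<length D. ps ! i \<in> stanley_space (fst (D ! i)) (snd (D ! i))) \<and>
      p = (\<lambda>a. \<Sum>i<length D. (ps ! i) a)"
    if p: "p \<in> (Sf n A :: ((nat \<Rightarrow> int) \<Rightarrow> 'k) set)" for p
  proof
    let ?ps = "map (\<lambda>i a. if a \<in> M i then p a else 0) [0..<length D]"
    have fin: "finite {a. p a \<noteq> 0}" and supp: "{a. p a \<noteq> 0} \<subseteq> (\<Union>i<length D. M i)"
      using p cov by (auto simp: Sf_def)
    have "p = (\<lambda>a. \<Sum>i<length D. (?ps ! i) a)"
      using sum_restrict_partition[OF disj supp] by simp
    moreover have "?ps ! i \<in> stanley_space (fst (D ! i)) (snd (D ! i))" if "i < length D" for i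
      using that fin unfolding space_eq by (auto elim: rev_finite_subset)
    ultimately show "length ?ps = length D \<and>
        (\<forall>i<length D. ?ps ! i \<in> stanley_space (fst (D ! i)) (snd (D ! i))) \<and>
        p = (\<lambda>a. \<Sum>i<length D. (?ps ! i) a)" by simp
    fix qs assume qs: "length qs = length D \<and>
        (\<forall>i<length D. qs ! i \<in> stanley_space (fst (D ! i)) (snd (D ! i))) \<and>
        p = (\<lambda>a. \<Sum>i<length D. (qs ! i) a)"
    then have "\<forall>i<length qs. {a. (qs ! i) a \<noteq> 0} \<subseteq> M i"
      unfolding space_eq by auto
    then have "(qs ! i) a = (?ps ! i) a" if "i < length D" for i a
      using component_eq_restrict[of qs M i a] qs disj that by simp
    with qs show "qs = ?ps"
      by (intro nth_equalityI ext) auto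
  qed
  ultimately show ?thesis
    using spaces unfolding stanley_decomp_def by blast
qed

lemma card_le_of_is_stanley_space:
  assumes "is_stanley_space n A u Z" and "A \<subseteq> {1..n}"
  shows "card Z \<le> n"
proof -
  have Z: "Z \<subseteq> {1..n} \<times> UNIV" and no_pair: "\<forall>j\<in>A. \<not> ((j, True) \<in> Z \<and> (j, False) \<in> Z)"
    using assms unfolding is_stanley_space_def by auto
  have "inj_on fst Z"
  proof (rule inj_onI)
    fix x y assume "x \<in> Z" "y \<in> Z" "fst x = fst y"
    moreover have "fst x \<in> A" if "x \<in> Z" "snd x = False" for x
      using that assms(1) unfolding is_stanley_space_def by (cases x) auto
    ultimately show "x = y"
      using no_pair by (cases x; cases y; cases "snd x"; cases "snd y") auto
  qed
  then have "card Z \<le> card {1..n}"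
    using Z by (intro card_inj_on_le) auto
  then show ?thesis by simp
qed

lemma stanley_decomp_nonempty:
  assumes "stanley_decomp TYPE('k::field) n A D"
  shows "D \<noteq> []"
proof
  assume D: "D = []"
  let ?one = "(\<lambda>a. if a = (\<lambda>_. 0) then 1 else 0) :: (nat \<Rightarrow> int) \<Rightarrow> 'k"
  have "{a. ?one a \<noteq> 0} = {\<lambda>_. 0}" by auto
  then have "?one \<in> Sf n A" by (simp add: Sf_def mon_set_def)
  with assms D have "?one = (\<lambda>a. 0)"
    unfolding stanley_decomp_def by auto
  then show False by (metis zero_neq_one)
qed

lemma sdepth_decomp_le:
  assumes "stanley_decomp TYPE('k::field) n A D" and "A \<subseteq> {1..n}"
  shows "sdepth_decomp D \<le> n"
proof -
  obtain d where d: "d \<in> set D"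
    using stanley_decomp_nonempty[OF assms(1)] by (cases D) auto
  then have "sdepth_decomp D \<le> card (snd d)"
    unfolding sdepth_decomp_def by (intro Min_le) auto
  also have "card (snd d) \<le> n"
    using assms d card_le_of_is_stanley_space unfolding stanley_decomp_def by blast
  finally show ?thesis .
qed

lemma stanley_decomp_orthants:
  fixes Bs :: "nat set list" and n :: nat
  defines "D \<equiv> map (\<lambda>B. (orthant_base n (\<lambda>j. j \<notin> B), orthant_vars n (\<lambda>j. j \<notin> B))) Bs"
  assumes A: "A \<subseteq> {1..n}" and Bs: "distinct Bs" "set Bs = Pow A"
  shows "stanley_decomp TYPE('k::field) n A D"
proof (rule stanley_decomp_of_partition)
  have len: "length D = length Bs" by (simp add: D_def)
  have D_nth: "zprod (fst (D ! i)) (snd (D ! i)) ` zexps (snd (D ! i)) = orthant n (\<lambda>j. j \<notin> Bs ! i)"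
    and Bs_nth: "Bs ! i \<subseteq> A" if "i < length D" for i
    using that zprod_orthant_image Bs nth_mem[of i Bs] by (auto simp: D_def)
  show "\<forall>d\<in>set D. is_stanley_space n A (fst d) (snd d)"
    using Bs by (auto simp: D_def intro!: is_stanley_space_orthant)
  show "\<forall>i<length D. zprod (fst (D ! i)) (snd (D ! i)) ` zexps (snd (D ! i)) \<subseteq> mon_set n A"
  proof (intro allI impI)
    fix i assume i: "i < length D"
    then have "\<forall>j\<in>{1..n}. \<not> j \<notin> Bs ! i \<longrightarrow> j \<in> A"
      using Bs_nth by blast
    then show "zprod (fst (D ! i)) (snd (D ! i)) ` zexps (snd (D ! i)) \<subseteq> mon_set n A"
      unfolding D_nth[OF i] by (rule orthant_subset_mon_set)
  qed
  show "\<forall>i<length D. \<forall>k<length D. i \<noteq> k \<longrightarrow>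
      zprod (fst (D ! i)) (snd (D ! i)) ` zexps (snd (D ! i)) \<inter>
      zprod (fst (D ! k)) (snd (D ! k)) ` zexps (snd (D ! k)) = {}"
  proof (intro allI impI)
    fix i k assume ik: "i < length D" "k < length D" "i \<noteq> k"
    then have "Bs ! i \<noteq> Bs ! k"
      using Bs(1) by (simp add: len nth_eq_iff_index_eq)
    then obtain j where j: "(j \<in> Bs ! i) \<noteq> (j \<in> Bs ! k)"
      by blast
    then have "j \<in> {1..n}"
      using Bs_nth[OF ik(1)] Bs_nth[OF ik(2)] A by blast
    with j show "zprod (fst (D ! i)) (snd (D ! i)) ` zexps (snd (D ! i)) \<inter>
        zprod (fst (D ! k)) (snd (D ! k)) ` zexps (snd (D ! k)) = {}"
      unfolding D_nth[OF ik(1)] D_nth[OF ik(2)] by (intro orthants_disjoint) simp_all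
  qed
  show "mon_set n A \<subseteq> (\<Union>i<length D. zprod (fst (D ! i)) (snd (D ! i)) ` zexps (snd (D ! i)))"
  proof
    fix a assume a: "a \<in> mon_set n A"
    have "{j\<in>A. a j < 0} \<in> set Bs" using Bs(2) by blast
    then obtain i where i: "i < length D" "Bs ! i = {j\<in>A. a j < 0}"
      by (metis in_set_conv_nth len)
    then have "a \<in> zprod (fst (D ! i)) (snd (D ! i)) ` zexps (snd (D ! i))"
      using D_nth[OF i(1)] mon_set_in_orthant[OF a] by simp
    with i(1) show "a \<in> (\<Union>i<length D. zprod (fst (D ! i)) (snd (D ! i)) ` zexps (snd (D ! i)))"
      by blast
  qed
qed

lemma orthant_stanley_decomp:
  assumes "A \<subseteq> {1..n}"
  shows "\<exists>D. stanley_decomp TYPE('k::field) n A D \<and> sdepth_decomp D = n"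
proof -
  obtain xs where xs: "set xs = A" "distinct xs"
    using finite_distinct_list[OF finite_subset[OF assms finite_atLeastAtMost]] by blast
  define Bs where "Bs = map set (subseqs xs)"
  have Bs: "distinct Bs" "set Bs = Pow A"
    using xs distinct_set_subseqs[of xs] subseqs_powset[of xs] by (simp_all add: Bs_def)
  define D where "D = map (\<lambda>B. (orthant_base n (\<lambda>j. j \<notin> B), orthant_vars n (\<lambda>j. j \<notin> B))) Bs"
  have "stanley_decomp TYPE('k) n A D"
    unfolding D_def using assms Bs by (rule stanley_decomp_orthants)
  moreover have "sdepth_decomp D = n"
  proof -
    have "(\<lambda>d. card (snd d)) ` set D = {n}"
      using Bs(2) by (force simp: D_def card_orthant_vars)
    then show ?thesis by (simp add: sdepth_decomp_def)
  qed
  ultimately show ?thesis by blast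
qed

theorem corollary2p3:
  fixes n :: nat and A :: "nat set"
  assumes "A \<subseteq> {1..n}"
  shows "sdepth_Sf TYPE('k::field) n A = n"
proof -
  let ?S = "{sdepth_decomp D | D. stanley_decomp TYPE('k) n A D}"
  have "?S \<subseteq> {..n}"
    using sdepth_decomp_le[OF _ assms] by blast
  then have "finite ?S" and "\<forall>s\<in>?S. s \<le> n"
    using finite_subset by auto
  moreover have "n \<in> ?S"
    using orthant_stanley_decomp[OF assms] by auto
  ultimately show ?thesis
    unfolding sdepth_Sf_def by (intro Max_eqI) auto
qed

end
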